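(* Let $x, y \in \mathbb{Z}$, let $S$ be a finite set of functions $f_i(z) = a_i z + b_i$ with $a_i, b_i \in \mathbb{Z}$ and $a_i \ne 0$, let $k \in \mathbb{Z}\setminus\{0\}$ and $g(z) = z + k$, and put $F = S \cup \{g\}$ and $\mathbf{G} = \{ G : G \text{ is an } S\text{-composition with } G(x) \equiv y \pmod k\}$. Then: (A) If $\mathbf{G} = \emptyset$, then $x \not\xrightarrow{F} y$. (B) If some $G \in \mathbf{G}$ satisfies $\operatorname{sgn}(G(x) - y) \ne \operatorname{sgn}(k)$, then $x \xrightarrow{F} y$. (C) If some $G \in \mathbf{G}$, written $G = f_{e_0} \circ \cdots \circ f_{e_K}$ with $f_{e_i} \in S$, has $a_{e_j} < 0$ for some $j$, then $x \xrightarrow{F} y$. (D) If none of the hypotheses of (A), (B), (C) hold, then $x \not\xrightarrow{F} y$.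
   Context: For a set $S$ of affine functions $\mathbb{Z}\to\mathbb{Z}$, an $S$-composition is a finite tuple $(s_1,\dots,s_K)$ with $K \ge 0$ and each $s_i \in S$, identified with the function $s_K \circ \dots \circ s_1$ (the empty tuple being the identity). We write $x \xrightarrow{S} y$ if there exists an $S$-composition $G$ with $G(x) = y$. $\operatorname{sgn}$ denotes the sign function with values in $\{-1,0,1\}$. *)

theory Defs
  imports Main "HOL-Number_Theory.Cong"
begin

text \<open>An S-composition is a list (s_1,...,s_K) of elements of S; it denotes
  s_K o ... o s_1, i.e. s_1 is applied first.\<close>
definition comp_apply :: "(int \<Rightarrow> int) list \<Rightarrow> int \<Rightarrow> int" where
  "comp_apply ss x = foldl (\<lambda>v f. f v) x ss"

definition reaches :: "(int \<Rightarrow> int) set \<Rightarrow> int \<Rightarrow> int \<Rightarrow> bool" where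
  "reaches S x y \<longleftrightarrow> (\<exists>ss \<in> lists S. comp_apply ss x = y)"

definition affine_fun :: "(int \<Rightarrow> int) \<Rightarrow> bool" where
  "affine_fun f \<longleftrightarrow> (\<exists>a b. a \<noteq> 0 \<and> f = (\<lambda>z. a * z + b))"

definition neg_slope :: "(int \<Rightarrow> int) \<Rightarrow> bool" where
  "neg_slope f \<longleftrightarrow> (\<exists>a b. a < 0 \<and> f = (\<lambda>z. a * z + b))"

end

theory Submission
  imports Defs
begin

text \<open>Every $F$-composition can be rearranged so that all applications of $g(z) = z + k$
  come last: moving $g$ past an $f(z) = a z + b$ turns one shift by $k$ into a shift by $a k$.
  So a reachable $y$ has the form $G(x) + c k$ with $G$ the $S$-part, and $c \ge 0$ when all
  slopes are positive. Conversely, any target $G(x) + c k$ with $c \ge 0$ is reached by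
  appending $g$ to $G$ $c$ times; and a negative slope inserted just before a copy of $g$
  flips its sign, which makes every residue-compatible target reachable.\<close>

lemma comp_apply_Nil [simp]: "comp_apply [] x = x"
  by (simp add: comp_apply_def)

lemma comp_apply_Cons [simp]: "comp_apply (f # fs) x = comp_apply fs (f x)"
  by (simp add: comp_apply_def)

lemma comp_apply_append: "comp_apply (fs @ gs) x = comp_apply gs (comp_apply fs x)"
  by (simp add: comp_apply_def)

lemma comp_apply_snoc [simp]: "comp_apply (fs @ [f]) x = f (comp_apply fs x)"
  by (simp add: comp_apply_append)

lemma comp_apply_replicate_shift: "comp_apply (replicate n (\<lambda>z. z + k)) x = x + int n * k"
  by (induction n arbitrary: x) (auto simp: algebra_simps)

lemma affine_fun_not_neg_slopeE:
  assumes "affine_fun f" "\<not> neg_slope f"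
  obtains a b where "a > 0" "f = (\<lambda>z. a * z + b)"
proof -
  from assms(1) obtain a b where "a \<noteq> 0" "f = (\<lambda>z. a * z + b)"
    unfolding affine_fun_def by blast
  moreover from this assms(2) have "\<not> a < 0"
    unfolding neg_slope_def by blast
  ultimately show ?thesis using that by force
qed

lemma comp_apply_pos_slopes_add:
  assumes "\<forall>f\<in>set fs. affine_fun f \<and> \<not> neg_slope f"
  shows "\<exists>p>0. \<forall>v d. comp_apply fs (v + d) = comp_apply fs v + p * d"
  using assms
proof (induction fs rule: rev_induct)
  case Nil
  show ?case by (intro exI[of _ 1]) simp
next
  case (snoc f fs)
  then obtain p where "p > 0" "\<forall>v d. comp_apply fs (v + d) = comp_apply fs v + p * d"
    by auto
  moreover obtain a b where "a > 0" "f = (\<lambda>z. a * z + b)"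
    using snoc.prems affine_fun_not_neg_slopeE by auto
  ultimately show ?case
    by (intro exI[of _ "a * p"]) (auto simp: algebra_simps)
qed

lemma comp_apply_eq_filter_add_shifts:
  assumes aff: "\<forall>f\<in>S. affine_fun f" and H: "H \<in> lists (S \<union> {\<lambda>z. z + k})"
  shows "\<exists>c. comp_apply H x = comp_apply (filter (\<lambda>f. f \<in> S) H) x + c * k
           \<and> ((\<forall>f\<in>set (filter (\<lambda>f. f \<in> S) H). \<not> neg_slope f) \<longrightarrow> c \<ge> 0)"
  using H
proof (induction H rule: rev_induct)
  case Nil
  show ?case by (intro exI[of _ 0]) simp
next
  case (snoc f H)
  then obtain c where c: "comp_apply H x = comp_apply (filter (\<lambda>f. f \<in> S) H) x + c * k"
    "(\<forall>f\<in>set (filter (\<lambda>f. f \<in> S) H). \<not> neg_slope f) \<longrightarrow> c \<ge> 0"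
    by auto
  show ?case
  proof (cases "f \<in> S")
    case True
    then obtain a b where ab: "f = (\<lambda>z. a * z + b)"
      using aff unfolding affine_fun_def by blast
    have "0 \<le> a * c" if "\<forall>f\<in>set (filter (\<lambda>f. f \<in> S) (H @ [f])). \<not> neg_slope f"
    proof -
      from that True ab have "a \<ge> 0" unfolding neg_slope_def by (auto simp: not_less)
      moreover from that c(2) have "c \<ge> 0" by auto
      ultimately show ?thesis by simp
    qed
    then show ?thesis
      using True c(1) ab by (intro exI[of _ "a * c"]) (simp add: algebra_simps)
  next
    case False
    then have "f = (\<lambda>z. z + k)" using snoc.prems by auto
    then show ?thesis using False c
      by (intro exI[of _ "c + 1"]) (auto simp: algebra_simps)
  qed
qed

lemma reaches_imp_comp_apply_add_shifts:
  assumes "\<forall>f\<in>S. affine_fun f" "reaches (S \<union> {\<lambda>z. z + k}) x y"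
  shows "\<exists>G\<in>lists S. \<exists>c. y = comp_apply G x + c * k
           \<and> ((\<forall>f\<in>set G. \<not> neg_slope f) \<longrightarrow> c \<ge> 0)"
proof -
  from assms(2) obtain H where H: "H \<in> lists (S \<union> {\<lambda>z. z + k})" "comp_apply H x = y"
    unfolding reaches_def by blast
  moreover have "filter (\<lambda>f. f \<in> S) H \<in> lists S" by auto
  ultimately show ?thesis
    using comp_apply_eq_filter_add_shifts[OF assms(1) H(1), of x] by metis
qed

lemma reaches_append_shifts:
  assumes "H \<in> lists (S \<union> {\<lambda>z. z + k})" "comp_apply H x - y = m * k" "m \<le> 0"
  shows "reaches (S \<union> {\<lambda>z. z + k}) x y"
proof -
  let ?H' = "H @ replicate (nat (- m)) (\<lambda>z. z + k)"
  have "comp_apply ?H' x = y"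
    using assms(2,3) by (simp add: comp_apply_append comp_apply_replicate_shift algebra_simps)
  moreover have "?H' \<in> lists (S \<union> {\<lambda>z. z + k})" using assms(1) by auto
  ultimately show ?thesis unfolding reaches_def by blast
qed

lemma reaches_if_sgn_ne:
  assumes "G \<in> lists S" "[comp_apply G x = y] (mod k)" "sgn (comp_apply G x - y) \<noteq> sgn k"
  shows "reaches (S \<union> {\<lambda>z. z + k}) x y"
proof -
  from assms(2) obtain m where m: "comp_apply G x - y = m * k"
    by (metis cong_iff_dvd_diff dvdE mult.commute)
  with assms(3) have "m \<le> 0" by (cases "m > 0") (auto simp: sgn_mult)
  with assms(1) m show ?thesis by (intro reaches_append_shifts) auto
qed

lemma reaches_if_neg_slope:
  assumes aff: "\<forall>f\<in>S. affine_fun f"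
    and G: "G \<in> lists S" "[comp_apply G x = y] (mod k)" "\<exists>f\<in>set G. neg_slope f"
  shows "reaches (S \<union> {\<lambda>z. z + k}) x y"
proof -
  from G(2) obtain m where m: "comp_apply G x - y = m * k"
    by (metis cong_iff_dvd_diff dvdE mult.commute)
  from split_list_last_prop[OF G(3)] obtain A f B where
    AfB: "G = A @ f # B" "neg_slope f" "\<forall>h\<in>set B. \<not> neg_slope h"
    by blast
  from AfB(2) obtain a b where ab: "a < 0" "f = (\<lambda>z. a * z + b)"
    unfolding neg_slope_def by blast
  have "\<forall>h\<in>set B. affine_fun h \<and> \<not> neg_slope h" using aff G(1) AfB by auto
  then obtain p where p: "p > 0" "\<forall>v d. comp_apply B (v + d) = comp_apply B v + p * d"
    using comp_apply_pos_slopes_add by blast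
  \<comment> \<open>$t$ shifts placed before the last negative slope move the result by $p a t k$, $p a \le -1$.\<close>
  define t where "t = nat \<bar>m\<bar>"
  define H where "H = A @ replicate t (\<lambda>z. z + k) @ f # B"
  have "comp_apply H x = comp_apply B (f (comp_apply A x) + a * int t * k)"
    unfolding H_def using ab by (simp add: comp_apply_append comp_apply_replicate_shift algebra_simps)
  also have "\<dots> = comp_apply G x + p * a * int t * k"
    using p AfB(1) by (simp add: comp_apply_append algebra_simps)
  finally have "comp_apply H x - y = (m + p * a * int t) * k"
    using m by (simp add: algebra_simps)
  moreover have "p * a \<le> -1" using p(1) ab(1) mult_pos_neg[of p a] by linarith
  then have "m + p * a * int t \<le> 0"
    unfolding t_def using mult_right_mono[of "p * a" "-1" "int (nat \<bar>m\<bar>)"] by simp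
  moreover have "H \<in> lists (S \<union> {\<lambda>z. z + k})" using G(1) AfB(1) unfolding H_def by auto
  ultimately show ?thesis using reaches_append_shifts by blast
qed

theorem mainTheorem4:
  fixes x y k :: int and S :: "(int \<Rightarrow> int) set"
  assumes "finite S"
    and "\<forall>f\<in>S. affine_fun f"
    and "k \<noteq> 0"
  defines "g \<equiv> (\<lambda>z. z + k)"
  defines "F \<equiv> S \<union> {g}"
  defines "GG \<equiv> {G \<in> lists S. [comp_apply G x = y] (mod k)}"
  shows "(GG = {} \<longrightarrow> \<not> reaches F x y)
       \<and> ((\<exists>G\<in>GG. sgn (comp_apply G x - y) \<noteq> sgn k) \<longrightarrow> reaches F x y)
       \<and> ((\<exists>G\<in>GG. \<exists>f\<in>set G. neg_slope f) \<longrightarrow> reaches F x y)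
       \<and> (\<not> (GG = {}) \<and> \<not> (\<exists>G\<in>GG. sgn (comp_apply G x - y) \<noteq> sgn k)
            \<and> \<not> (\<exists>G\<in>GG. \<exists>f\<in>set G. neg_slope f) \<longrightarrow> \<not> reaches F x y)"
proof -
  have necessary: "\<exists>G\<in>GG. \<exists>c. y = comp_apply G x + c * k
      \<and> ((\<forall>f\<in>set G. \<not> neg_slope f) \<longrightarrow> c \<ge> 0)" if "reaches F x y"
    using reaches_imp_comp_apply_add_shifts[OF assms(2)] that
    unfolding GG_def F_def g_def by (fastforce simp: cong_iff_dvd_diff)
  have "\<not> reaches F x y"
    if sgn_eq: "\<not> (\<exists>G\<in>GG. sgn (comp_apply G x - y) \<noteq> sgn k)"
      and pos_slopes: "\<not> (\<exists>G\<in>GG. \<exists>f\<in>set G. neg_slope f)"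
  proof
    assume "reaches F x y"
    then obtain G c where "G \<in> GG" "y = comp_apply G x + c * k" "c \<ge> 0"
      using necessary pos_slopes by blast
    with sgn_eq have "sgn (- c * k) = sgn k" by auto
    with \<open>c \<ge> 0\<close> \<open>k \<noteq> 0\<close> show False
      by (cases "c = 0") (auto simp: sgn_mult sgn_if mult_less_0_iff zero_less_mult_iff split: if_splits)
  qed
  moreover have "GG = {} \<longrightarrow> \<not> reaches F x y" using necessary by blast
  ultimately show ?thesis
    using reaches_if_sgn_ne reaches_if_neg_slope[OF assms(2)]
    unfolding GG_def F_def g_def by blast
qed

end
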